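(* Let $R$ and $S$ be two non-crossing geometric trees in the plane (vertices in general position) whose convex hulls intersect. Then either the convex hull of one of them lies strictly inside the convex hull of the other, or there exist two adjacent vertices on the convex hull of one of the trees whose visibility is blocked by the other tree (i.e., the segment joining them intersects the other tree).
   Context: A geometric tree is a plane straight-line embedding of a tree in $\mathbb{R}^2$, viewed as a subset of $\mathbb{R}^2$; two trees are non-crossing if they are disjoint as point sets. *)

theory Defs
  imports "HOL-Analysis.Analysis"
begin

type_synonym pt = "real^2"

definition graph_adj :: "pt set set \<Rightarrow> (pt \<times> pt) set" where
  "graph_adj E = {(u, v). {u, v} \<in> E}"

definition is_tree :: "pt set \<Rightarrow> pt set set \<Rightarrow> bool" where
  "is_tree V E \<longleftrightarrow> finite V \<and> V \<noteq> {} \<and>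
     (\<forall>e\<in>E. e \<subseteq> V \<and> card e = 2) \<and>
     (\<forall>u\<in>V. \<forall>v\<in>V. (u, v) \<in> (graph_adj E)\<^sup>*) \<and>
     card E = card V - 1"

definition plane_straight_line :: "pt set \<Rightarrow> pt set set \<Rightarrow> bool" where
  "plane_straight_line V E \<longleftrightarrow>
     (\<forall>e1\<in>E. \<forall>e2\<in>E. e1 \<noteq> e2 \<longrightarrow> convex hull e1 \<inter> convex hull e2 \<subseteq> e1 \<inter> e2) \<and>
     (\<forall>w\<in>V. \<forall>e\<in>E. w \<in> convex hull e \<longrightarrow> w \<in> e)"

definition geometric_tree :: "pt set \<Rightarrow> pt set set \<Rightarrow> bool" where
  "geometric_tree V E \<longleftrightarrow> is_tree V E \<and> plane_straight_line V E"

definition tree_points :: "pt set \<Rightarrow> pt set set \<Rightarrow> pt set" where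
  "tree_points V E = V \<union> \<Union> ((\<lambda>e. convex hull e) ` E)"

definition general_position :: "pt set \<Rightarrow> bool" where
  "general_position P \<longleftrightarrow>
     (\<forall>a\<in>P. \<forall>b\<in>P. \<forall>c\<in>P. a \<noteq> b \<and> a \<noteq> c \<and> b \<noteq> c \<longrightarrow> \<not> collinear {a, b, c})"

definition hull_adjacent :: "pt set \<Rightarrow> pt \<Rightarrow> pt \<Rightarrow> bool" where
  "hull_adjacent P u v \<longleftrightarrow> u \<noteq> v \<and>
     u extreme_point_of (convex hull P) \<and> v extreme_point_of (convex hull P) \<and>
     closed_segment u v face_of (convex hull P)"

end

theory Submission
  imports Defs
begin

text \<open>Suppose none of the four alternatives holds. If the tree \<open>S\<close> met the convex hull \<open>K\<close>
  of \<open>R\<close>, then, being connected and not inside the interior of \<open>K\<close>, it would meet the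
  boundary of the polygon \<open>K\<close>, which is covered by the hull edges of \<open>R\<close>; so \<open>S\<close> would block
  one of them. (General position rules out \<open>K\<close> having empty interior: then \<open>R\<close> has at most two
  vertices and \<open>K\<close> lies inside \<open>R\<close>.) Hence \<open>S\<close> avoids the hull of \<open>R\<close>, and symmetrically.
  But the hulls overlap, so the hull of \<open>S\<close> crosses the boundary of \<open>K\<close> at a point \<open>x\<close> of a hull
  edge \<open>uv\<close> of \<open>R\<close>. Its endpoints are vertices of \<open>R\<close>, hence outside the hull of \<open>S\<close>. A
  connected set missing the line \<open>uv\<close> has its hull on one side of it, which \<open>x\<close> forbids; and a
  point of \<open>S\<close> on the line outside the segment would put \<open>u\<close> or \<open>v\<close> into the hull of \<open>S\<close>. So \<open>S\<close>
  meets the segment \<open>uv \<subseteq> K\<close>, a contradiction.\<close>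

lemma closed_segment_endpoint_between:
  fixes u v :: "'a::real_vector"
  assumes "s \<in> affine hull {u, v}" "s \<notin> closed_segment u v" "p \<in> closed_segment u v"
  shows "u \<in> closed_segment s p \<or> v \<in> closed_segment s p"
proof -
  define f where "f t = u + t *\<^sub>R (v - u)" for t :: real
  have f_segment: "closed_segment (f a) (f b) = f ` closed_segment a b" for a b
    using closed_segment_translation[of u] closed_segment_linear_image[of "\<lambda>t. t *\<^sub>R (v - u)"]
    by (simp add: f_def image_image)
  have f01: "f 0 = u" "f 1 = v"
    by (simp_all add: f_def)
  obtain t where t: "s = f t"
  proof -
    obtain a b where "s = a *\<^sub>R u + b *\<^sub>R v" "a + b = 1"
      using assms(1) by (auto simp: affine_hull_2)
    then have "s = (1 - b) *\<^sub>R u + b *\<^sub>R v"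
      by (metis add_diff_cancel_right')
    then have "s = f b" by (simp add: f_def algebra_simps)
    then show ?thesis by (rule that)
  qed
  obtain t' where t': "p = f t'" "t' \<in> closed_segment 0 1"
    using assms(3) by (metis f01 f_segment imageE)
  have "t \<notin> closed_segment 0 1"
    using assms(2) t by (metis f01 f_segment image_eqI)
  then have "0 \<in> closed_segment t t' \<or> 1 \<in> closed_segment t t'"
    using t' by (auto simp: closed_segment_eq_real_ivl split: if_splits)
  then show ?thesis
    using t t' by (metis f01 f_segment image_eqI)
qed

lemma convex_hull_disjoint_hyperplane:
  fixes S :: "'a::euclidean_space set"
  assumes "connected S" "S \<inter> {x. a \<bullet> x = b} = {}"
  shows "convex hull S \<inter> {x. a \<bullet> x = b} = {}"
proof -
  have cover: "S \<subseteq> {x. a \<bullet> x < b} \<union> {x. a \<bullet> x > b}"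
    using assms(2) by (auto simp: neq_iff)
  have "{x. a \<bullet> x < b} \<inter> S = {} \<or> {x. a \<bullet> x > b} \<inter> S = {}"
    by (rule connectedD[OF assms(1) open_halfspace_lt open_halfspace_gt _ cover]) auto
  then have "S \<subseteq> {x. a \<bullet> x < b} \<or> S \<subseteq> {x. a \<bullet> x > b}"
    using cover by blast
  then have "convex hull S \<subseteq> {x. a \<bullet> x < b} \<or> convex hull S \<subseteq> {x. a \<bullet> x > b}"
    by (metis convex_halfspace_lt convex_halfspace_gt hull_minimal)
  then show ?thesis
    by auto
qed

lemma closed_segment_meets_connected:
  fixes S :: "'a::euclidean_space set"
  assumes "DIM('a) = 2" "connected S" "u \<notin> convex hull S" "v \<notin> convex hull S"
    and "closed_segment u v \<inter> convex hull S \<noteq> {}"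
  shows "closed_segment u v \<inter> S \<noteq> {}"
proof
  assume disjoint: "closed_segment u v \<inter> S = {}"
  obtain p where p: "p \<in> closed_segment u v" "p \<in> convex hull S"
    using assms(5) by blast
  then have "u \<noteq> v"
    using assms(3) by auto
  then obtain a b where line: "affine hull {u, v} = {x. a \<bullet> x = b}"
    using aff_dim_eq_hyperplane[of "{u, v}"] assms(1) by auto
  have "S \<inter> affine hull {u, v} = {}"
  proof -
    have "s \<notin> affine hull {u, v}" if "s \<in> S" for s
    proof
      assume "s \<in> affine hull {u, v}"
      then have "u \<in> closed_segment s p \<or> v \<in> closed_segment s p"
        using closed_segment_endpoint_between disjoint that p(1) by blast
      moreover have "closed_segment s p \<subseteq> convex hull S"
        using that p(2) by (simp add: hull_inc closed_segment_subset)
      ultimately show False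
        using assms(3,4) by blast
    qed
    then show ?thesis by blast
  qed
  then have "convex hull S \<inter> affine hull {u, v} = {}"
    using convex_hull_disjoint_hyperplane[OF assms(2)] line by simp
  moreover have "p \<in> affine hull {u, v}"
    using p(1) segment_convex_hull convex_hull_subset_affine_hull by blast
  ultimately show False
    using p(2) by blast
qed

lemma frontier_polytope_in_edge:
  fixes K :: "'a::euclidean_space set"
  assumes "DIM('a) = 2" "polytope K" "interior K \<noteq> {}" "x \<in> frontier K"
  obtains u v where "u \<noteq> v" "u extreme_point_of K" "v extreme_point_of K"
    "closed_segment u v face_of K" "x \<in> closed_segment u v"
proof -
  have "x \<in> rel_frontier K"
    using assms(3,4) rel_frontier_nonempty_interior by blast
  then obtain F where F: "F facet_of K" "x \<in> F"
    using rel_frontier_of_polyhedron[OF polytope_imp_polyhedron[OF assms(2)]] by blast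
  have "aff_dim K = 2"
    using aff_dim_nonempty_interior[OF assms(3)] assms(1) by simp
  then have F_face: "F face_of K" "F \<noteq> {}" "aff_dim F = 1"
    using F(1) by (auto simp: facet_of_def)
  have "polytope F"
    using face_of_polytope_polytope[OF assms(2) F_face(1)] .
  moreover have "collinear F"
    using F_face(3) by (simp add: collinear_aff_dim)
  ultimately obtain a b where ab: "F = closed_segment a b"
    using compact_convex_collinear_segment F_face(2) polytope_imp_compact polytope_imp_convex
    by metis
  then have "a \<noteq> b"
    using F_face(3) by auto
  then show ?thesis
    using that segment_face_of[of a b K] F_face(1) ab F(2) by auto
qed

lemma general_position_subset:
  "general_position B \<Longrightarrow> A \<subseteq> B \<Longrightarrow> general_position A"
  unfolding general_position_def by blast

lemma card_le_2_if_interior_convex_hull_empty: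
  assumes "general_position V" "interior (convex hull V) = {}"
  shows "card V \<le> 2"
proof (rule ccontr)
  assume "\<not> card V \<le> 2"
  then obtain T where T: "T \<subseteq> V" "card T = 3"
    using obtain_subset_with_card_n[of 3 V] by auto
  then obtain a b c where abc: "T = {a, b, c}" "a \<noteq> b" "a \<noteq> c" "b \<noteq> c"
    by (auto simp: card_3_iff)
  then have "\<not> collinear T"
    using assms(1) T(1) by (simp add: general_position_def)
  then have "aff_dim V \<ge> 2"
    using aff_dim_subset[OF T(1)] by (simp add: collinear_aff_dim)
  then have "aff_dim (convex hull V) = int DIM(pt)"
    using aff_dim_le_DIM[of V] by (simp add: aff_dim_convex_hull)
  moreover have "V \<noteq> {}"
    using T abc by auto
  ultimately have "interior (convex hull V) \<noteq> {}"
    by (simp add: interior_rel_interior_gen rel_interior_eq_empty)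
  then show False
    using assms(2) by simp
qed

lemma geometric_treeD:
  assumes "geometric_tree V E"
  shows "finite V" "V \<noteq> {}" "card E = card V - 1"
    and "\<And>e. e \<in> E \<Longrightarrow> e \<subseteq> V \<and> card e = 2"
    and "\<And>u v. u \<in> V \<Longrightarrow> v \<in> V \<Longrightarrow> (u, v) \<in> (graph_adj E)\<^sup>*"
  using assms unfolding geometric_tree_def is_tree_def by auto

lemma vertices_subset_tree_points: "V \<subseteq> tree_points V E"
  by (auto simp: tree_points_def)

lemma convex_hull_tree_points:
  assumes "geometric_tree V E"
  shows "convex hull (tree_points V E) = convex hull V"
proof (rule antisym)
  have "convex hull e \<subseteq> convex hull V" if "e \<in> E" for e
    using geometric_treeD(4)[OF assms that] by (simp add: hull_mono)
  then have "tree_points V E \<subseteq> convex hull V"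
    by (auto simp: tree_points_def hull_inc)
  then show "convex hull (tree_points V E) \<subseteq> convex hull V"
    by (simp add: convex_hull_subset)
  show "convex hull V \<subseteq> convex hull (tree_points V E)"
    by (simp add: hull_mono vertices_subset_tree_points)
qed

lemma polytope_convex_hull_tree_points:
  "geometric_tree V E \<Longrightarrow> polytope (convex hull (tree_points V E))"
  by (simp add: convex_hull_tree_points geometric_treeD(1) polytope_convex_hull)

lemma connected_tree_points:
  assumes "geometric_tree V E"
  shows "connected (tree_points V E)"
proof -
  let ?T = "tree_points V E"
  have edge: "connected_component ?T u x" if "e \<in> E" "u \<in> e" "x \<in> convex hull e" for e u x
    unfolding connected_component_def using that
    by (intro exI[of _ "convex hull e"]) (auto simp: convex_connected hull_inc tree_points_def)
  have walk: "connected_component ?T u v" if "(u, v) \<in> (graph_adj E)\<^sup>*" "u \<in> V" for u v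
    using that
  proof (induction rule: rtrancl_induct)
    case base
    then show ?case
      using vertices_subset_tree_points by (auto intro: connected_component_refl)
  next
    case (step y z)
    then have "connected_component ?T y z"
      using edge[of "{y, z}" y z] by (simp add: graph_adj_def hull_inc)
    then show ?case
      using step connected_component_trans by blast
  qed
  obtain v0 where v0: "v0 \<in> V"
    using geometric_treeD(2)[OF assms] by auto
  have "connected_component ?T v0 x" if "x \<in> ?T" for x
  proof -
    from that consider "x \<in> V" | e where "e \<in> E" "x \<in> convex hull e"
      by (auto simp: tree_points_def)
    then show ?thesis
    proof cases
      case 1
      then show ?thesis
        using walk geometric_treeD(5)[OF assms] v0 by blast
    next
      case 2
      then obtain u w where uw: "e = {u, w}"
        using geometric_treeD(4)[OF assms] by (metis card_2_iff)
      then have "connected_component ?T v0 u"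
        using walk geometric_treeD(4,5)[OF assms] v0 2(1) by blast
      then show ?thesis
        using edge[OF 2(1) _ 2(2), of u] uw connected_component_trans by blast
    qed
  qed
  then show ?thesis
    unfolding connected_iff_connected_component
    using connected_component_sym connected_component_trans by blast
qed

lemma convex_hull_subset_tree_points_if_card_le_2:
  assumes "geometric_tree V E" "card V \<le> 2"
  shows "convex hull V \<subseteq> tree_points V E"
proof -
  have "card V = 1 \<or> card V = 2"
    using assms(2) geometric_treeD(1,2)[OF assms(1)] card_0_eq[of V] by linarith
  then show ?thesis
  proof
    assume "card V = 1"
    then show ?thesis
      using vertices_subset_tree_points[of V E] by (auto simp: card_1_singleton_iff)
  next
    assume "card V = 2"
    then obtain e where "E = {e}"
      using geometric_treeD(3)[OF assms(1)] by (auto simp: card_1_singleton_iff)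
    moreover have "e = V"
      using geometric_treeD(1,4)[OF assms(1)] \<open>card V = 2\<close> \<open>E = {e}\<close>
      by (metis card_subset_eq singletonI)
    ultimately show ?thesis
      by (simp add: tree_points_def)
  qed
qed

lemma interior_convex_hull_tree_points_nonempty:
  assumes "geometric_tree V E" "general_position V"
    and "\<not> convex hull (tree_points V E) \<subseteq> tree_points V E"
  shows "interior (convex hull (tree_points V E)) \<noteq> {}"
  using assms card_le_2_if_interior_convex_hull_empty convex_hull_subset_tree_points_if_card_le_2
  by (metis convex_hull_tree_points)

lemma frontier_convex_hull_tree_points_in_hull_edge:
  assumes "geometric_tree V E" "interior (convex hull (tree_points V E)) \<noteq> {}"
    and "x \<in> frontier (convex hull (tree_points V E))"
  obtains u v where "hull_adjacent (tree_points V E) u v" "u \<in> V" "v \<in> V" "x \<in> closed_segment u v"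
proof -
  obtain u v where uv: "u \<noteq> v" "u extreme_point_of convex hull (tree_points V E)"
    "v extreme_point_of convex hull (tree_points V E)"
    "closed_segment u v face_of convex hull (tree_points V E)" "x \<in> closed_segment u v"
    using frontier_polytope_in_edge[OF _ polytope_convex_hull_tree_points[OF assms(1)] assms(2,3)]
    by auto
  moreover have "u \<in> V" "v \<in> V"
    using uv(2,3) extreme_point_of_convex_hull by (auto simp: convex_hull_tree_points[OF assms(1)])
  ultimately show ?thesis
    using that by (auto simp: hull_adjacent_def)
qed

lemma connected_crossing_convex_hull_meets_hull_edge:
  assumes tree: "geometric_tree V E" "general_position V" and "connected T"
    and "T \<inter> tree_points V E = {}" "T \<inter> convex hull (tree_points V E) \<noteq> {}"
    and "\<not> convex hull T \<subseteq> interior (convex hull (tree_points V E))"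
  shows "\<exists>u v. hull_adjacent (tree_points V E) u v \<and> closed_segment u v \<inter> T \<noteq> {}"
proof -
  let ?K = "convex hull (tree_points V E)"
  have "interior ?K \<noteq> {}"
    using interior_convex_hull_tree_points_nonempty[OF tree] assms(4,5) by blast
  have "\<not> T \<subseteq> interior ?K"
    using assms(6) hull_minimal[of T "interior ?K" convex] by (auto simp: convex_interior)
  moreover have "frontier ?K = ?K - interior ?K"
    by (simp add: frontier_def closure_closed compact_imp_closed compact_convex_hull
        polytope_imp_compact polytope_convex_hull_tree_points[OF tree(1)])
  ultimately have "T \<inter> frontier ?K \<noteq> {}"
    using connected_Int_frontier[OF assms(3)] assms(5) by blast
  then obtain x where "x \<in> T" "x \<in> frontier ?K"
    by blast
  then show ?thesis
    using frontier_convex_hull_tree_points_in_hull_edge[OF tree(1) \<open>interior ?K \<noteq> {}\<close>] by blast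
qed

lemma convex_hulls_disjoint_if_mutually_outside:
  assumes tree: "geometric_tree V E" "general_position V" and "connected T"
    and "T \<inter> convex hull (tree_points V E) = {}" "tree_points V E \<inter> convex hull T = {}"
  shows "convex hull T \<inter> convex hull (tree_points V E) = {}"
proof (rule ccontr)
  let ?K = "convex hull (tree_points V E)"
  assume overlap: "convex hull T \<inter> ?K \<noteq> {}"
  then have "interior ?K \<noteq> {}"
    using interior_convex_hull_tree_points_nonempty[OF tree] assms(5) by blast
  have "T \<noteq> {}"
    using overlap by auto
  then have "\<not> convex hull T \<subseteq> ?K"
    using assms(4) hull_subset[of T convex] by blast
  then obtain x where x: "x \<in> convex hull T" "x \<in> frontier ?K"
    using connected_Int_frontier[OF convex_connected[OF convex_convex_hull]] overlap by blast
  obtain u v where uv: "hull_adjacent (tree_points V E) u v" "u \<in> V" "v \<in> V" "x \<in> closed_segment u v"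
    using frontier_convex_hull_tree_points_in_hull_edge[OF tree(1) \<open>interior ?K \<noteq> {}\<close> x(2)] .
  have "u \<notin> convex hull T" "v \<notin> convex hull T"
    using uv(2,3) assms(5) vertices_subset_tree_points by blast+
  then have "closed_segment u v \<inter> T \<noteq> {}"
    using closed_segment_meets_connected[OF _ assms(3)] uv(4) x(1) by auto
  moreover have "closed_segment u v \<subseteq> ?K"
    using uv(1) face_of_imp_subset by (auto simp: hull_adjacent_def)
  ultimately show False
    using assms(4) by blast
qed

theorem lemma5:
  fixes VR VS :: "pt set" and ER ES :: "pt set set"
  assumes "geometric_tree VR ER" and "geometric_tree VS ES"
    and "general_position (VR \<union> VS)"
    and "tree_points VR ER \<inter> tree_points VS ES = {}"
    and "convex hull (tree_points VR ER) \<inter> convex hull (tree_points VS ES) \<noteq> {}"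
  shows "convex hull (tree_points VR ER) \<subseteq> interior (convex hull (tree_points VS ES))
      \<or> convex hull (tree_points VS ES) \<subseteq> interior (convex hull (tree_points VR ER))
      \<or> (\<exists>u v. hull_adjacent (tree_points VR ER) u v \<and>
               closed_segment u v \<inter> tree_points VS ES \<noteq> {})
      \<or> (\<exists>u v. hull_adjacent (tree_points VS ES) u v \<and>
               closed_segment u v \<inter> tree_points VR ER \<noteq> {})"
proof (rule ccontr)
  let ?R = "tree_points VR ER" and ?S = "tree_points VS ES"
  assume "\<not> ?thesis"
  moreover have "general_position VR" "general_position VS"
    using assms(3) general_position_subset by blast+
  ultimately have "?S \<inter> convex hull ?R = {}" "?R \<inter> convex hull ?S = {}"
    using connected_crossing_convex_hull_meets_hull_edge connected_tree_points assms(1,2,4)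
    by (metis inf_commute)+
  then have "convex hull ?S \<inter> convex hull ?R = {}"
    using convex_hulls_disjoint_if_mutually_outside[OF assms(1) \<open>general_position VR\<close>]
      connected_tree_points[OF assms(2)] by blast
  then show False
    using assms(5) by blast
qed

end
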